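(* Let $A=[a_{ij}]_{i,j=1}^n$ be the transition matrix of a Markov chain on $n$ states (so $a_{ij}\ge 0$ and each row of $A$ sums to $1$). For each positive integer $N$, let $\mu_0^{(N)}\in\mathbb{N}^n$ be a distribution of $N$ particles (nonnegative integer entries summing to $N$), and let $M^{(N)}=[m^{(N)}_{ij}]\in\mathbb{N}^{n\times n}$ be a matrix with nonnegative integer entries such that $M^{(N)}\mathbf{1}=\mu_0^{(N)}$ and $\mathrm{supp}(M^{(N)})\subseteq \mathrm{supp}(\mathrm{diag}(\mu_0^{(N)})A)$. Then there exists a constant $C>0$ such that for all $N$, \[ \left|\log\!\left(P_{\mu_0^{(N)},A}(M^{(N)})\right)+H\!\left(M^{(N)}\,\middle|\,\mathrm{diag}(\mu_0^{(N)})A\right)\right|\le C\log(N). \]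
   Context: $\mathbf{1}$ denotes the $n\times 1$ vector of ones; $\mathrm{supp}(\cdot)$ of a matrix is the set of indices of its nonzero entries. For $\mu_0\in\mathbb{N}^n$ and $M\in\mathbb{N}^{n\times n}$ with $M\mathbf{1}=\mu_0$, the probability of the mass transfer matrix $M$ (where $m_{ij}$ is the number of particles moving from state $i$ to state $j$ when each particle independently moves according to $A$) is \[ P_{\mu_0,A}(M)=\prod_{i=1}^n\left(\binom{(\mu_0)_i}{m_{i1},m_{i2},\dots,m_{in}}\prod_{j=1}^n a_{ij}^{m_{ij}}\right), \] with multinomial coefficients. For nonnegative vectors or matrices $p,q$ of the same dimension, the Kullback–Leibler divergence is $H(p|q)=\sum_i p_i\log(p_i/q_i)$, with the convention $0\log 0=0$. *)

theory Defs
  imports "HOL-Analysis.Analysis"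
begin

definition stochastic :: "('n::finite \<Rightarrow> 'n \<Rightarrow> real) \<Rightarrow> bool" where
  "stochastic A \<longleftrightarrow> (\<forall>i j. A i j \<ge> 0) \<and> (\<forall>i. (\<Sum>j\<in>UNIV. A i j) = 1)"

definition multinom :: "nat \<Rightarrow> ('n::finite \<Rightarrow> nat) \<Rightarrow> real" where
  "multinom m k = fact m / (\<Prod>j\<in>UNIV. fact (k j))"

definition transfer_prob :: "('n::finite \<Rightarrow> nat) \<Rightarrow> ('n \<Rightarrow> 'n \<Rightarrow> real) \<Rightarrow> ('n \<Rightarrow> 'n \<Rightarrow> nat) \<Rightarrow> real" where
  "transfer_prob mu0 A M =
     (\<Prod>i\<in>UNIV. multinom (mu0 i) (M i) * (\<Prod>j\<in>UNIV. A i j ^ M i j))"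

definition KL :: "('n::finite \<Rightarrow> 'n \<Rightarrow> real) \<Rightarrow> ('n \<Rightarrow> 'n \<Rightarrow> real) \<Rightarrow> real" where
  "KL p q = (\<Sum>i\<in>UNIV. \<Sum>j\<in>UNIV. if p i j = 0 then 0 else p i j * ln (p i j / q i j))"

definition diag_mul :: "('n::finite \<Rightarrow> nat) \<Rightarrow> ('n \<Rightarrow> 'n \<Rightarrow> real) \<Rightarrow> 'n \<Rightarrow> 'n \<Rightarrow> real" where
  "diag_mul mu0 A i j = real (mu0 i) * A i j"

end

theory Submission
  imports Defs
begin

text \<open>With the Stirling remainder \<open>R k = ln k! - k ln k + k\<close>, the row sums of \<open>M\<close> make all
  terms \<open>m ln m\<close> and \<open>m\<close> cancel, and \<open>ln P(M) + H(M | diag(\<mu>\<^sub>0) A)\<close> collapses exactly to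
  \<open>\<Sum>\<^sub>i (R(\<mu>\<^sub>0 i) - \<Sum>\<^sub>j R(m\<^sub>i\<^sub>j))\<close>.  Telescoping \<open>R\<close> and comparing \<open>k (ln (k+1) - ln k)\<close> with 1
  gives \<open>1 \<le> R k \<le> 1 + ln k\<close> for \<open>k \<ge> 1\<close>, so each of the \<open>n (n + 1)\<close> remainders is \<open>O(ln N)\<close>;
  for \<open>N = 1\<close> the sum vanishes because \<open>R 0 = 0\<close> and \<open>R 1 = 1\<close>.\<close>

definition stirling_remainder :: "nat \<Rightarrow> real" where
  "stirling_remainder k = ln (fact k) - real k * ln (real k) + real k"

lemma stirling_remainder_eq_self: "k \<le> 1 \<Longrightarrow> stirling_remainder k = real k"
  by (cases k) (auto simp: stirling_remainder_def)

lemma stirling_remainder_Suc: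
  "stirling_remainder (Suc k) = stirling_remainder k + 1 - real k * (ln (real k + 1) - ln (real k))"
proof -
  have "ln (fact (Suc k) :: real) = ln (real k + 1) + ln (fact k)"
    by (simp add: ln_mult add.commute)
  then show ?thesis
    unfolding stirling_remainder_def by (simp add: algebra_simps)
qed

lemma ln_Suc_diff_bounds:
  assumes "k \<ge> 1"
  shows "real k * (ln (real k + 1) - ln (real k)) \<le> 1"
    and "(real k + 1) * (ln (real k + 1) - ln (real k)) \<ge> 1"
proof -
  have k: "real k > 0" using assms by simp
  have "ln ((real k + 1) / real k) \<le> (real k + 1) / real k - 1"
    using k by (intro ln_le_minus_one) simp
  then show "real k * (ln (real k + 1) - ln (real k)) \<le> 1"
    using k by (simp add: ln_div field_simps)
  have "ln (real k / (real k + 1)) \<le> real k / (real k + 1) - 1"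
    using k by (intro ln_le_minus_one) simp
  then show "(real k + 1) * (ln (real k + 1) - ln (real k)) \<ge> 1"
    using k by (simp add: ln_div field_simps)
qed

lemma stirling_remainder_bounds:
  "k \<ge> 1 \<Longrightarrow> 1 \<le> stirling_remainder k \<and> stirling_remainder k \<le> 1 + ln (real k)"
proof (induction k rule: dec_induct)
  case base
  then show ?case by (simp add: stirling_remainder_eq_self)
next
  case (step k)
  then show ?case
    using ln_Suc_diff_bounds[OF step(1)] by (simp add: stirling_remainder_Suc algebra_simps)
qed

lemma abs_stirling_remainder_le:
  assumes "k \<le> N" and "N \<ge> 2"
  shows "\<bar>stirling_remainder k\<bar> \<le> 3 * ln (real N)"
proof -
  have "1 / 2 \<le> ln (2 :: real)"
    using ln_Suc_diff_bounds(2)[of 1] by simp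
  also have "\<dots> \<le> ln (real N)"
    using assms(2) by simp
  finally have lnN: "1 / 2 \<le> ln (real N)" .
  show ?thesis
  proof (cases "k = 0")
    case True
    then show ?thesis using lnN by (simp add: stirling_remainder_eq_self)
  next
    case False
    then have "ln (real k) \<le> ln (real N)" using assms(1) by simp
    then show ?thesis using stirling_remainder_bounds[of k] False lnN by auto
  qed
qed

lemma abs_stirling_defect_le:
  fixes r :: "'n::finite \<Rightarrow> nat"
  assumes sum_r: "(\<Sum>j\<in>UNIV. r j) = m" and "m \<le> N" and "N \<ge> 1"
  shows "\<bar>stirling_remainder m - (\<Sum>j\<in>UNIV. stirling_remainder (r j))\<bar>
           \<le> 3 * (real CARD('n) + 1) * ln (real N)"
proof -
  have r_le: "r j \<le> N" for j
    using member_le_sum[of j UNIV r] sum_r assms(2) by simp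
  show ?thesis
  proof (cases "N = 1")
    case True
    then have "(\<Sum>j\<in>UNIV. stirling_remainder (r j)) = (\<Sum>j\<in>UNIV. real (r j))"
      using r_le by (intro sum.cong) (auto simp: stirling_remainder_eq_self)
    also have "\<dots> = stirling_remainder m"
      using sum_r assms(2) True by (simp flip: of_nat_sum add: stirling_remainder_eq_self)
    finally show ?thesis using True by simp
  next
    case False
    then have N: "N \<ge> 2" using assms(3) by simp
    have "\<bar>\<Sum>j\<in>UNIV. stirling_remainder (r j)\<bar> \<le> (\<Sum>j\<in>(UNIV::'n set). 3 * ln (real N))"
      using abs_stirling_remainder_le[OF r_le N]
      by (intro order.trans[OF sum_abs] sum_mono)
    then have "\<bar>\<Sum>j\<in>UNIV. stirling_remainder (r j)\<bar> \<le> real CARD('n) * (3 * ln (real N))"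
      by simp
    moreover have "\<bar>stirling_remainder m\<bar> \<le> 3 * ln (real N)"
      using abs_stirling_remainder_le[OF assms(2) N] .
    ultimately show ?thesis by (simp add: algebra_simps)
  qed
qed

lemma ln_multinom_prob_add_relative_entropy:
  fixes r :: "'n::finite \<Rightarrow> nat" and a :: "'n \<Rightarrow> real"
  assumes sum_r: "(\<Sum>j\<in>UNIV. r j) = m" and supp: "\<And>j. r j \<noteq> 0 \<Longrightarrow> a j \<noteq> 0"
  shows "ln (multinom m r * (\<Prod>j\<in>UNIV. a j ^ r j))
       + (\<Sum>j\<in>UNIV. if r j = 0 then 0 else real (r j) * ln (real (r j) / (real m * a j)))
       = stirling_remainder m - (\<Sum>j\<in>UNIV. stirling_remainder (r j))"
proof -
  have pow_nz: "a j ^ r j \<noteq> 0" for j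
    using supp by (cases "r j = 0") auto
  have multinom_nz: "multinom m r \<noteq> 0"
    by (simp add: multinom_def)
  have ln_multinom: "ln (multinom m r) = ln (fact m) - (\<Sum>j\<in>UNIV. ln (fact (r j)))"
    unfolding multinom_def by (simp add: ln_div ln_prod)
  have ln_pow_prod: "ln (\<Prod>j\<in>UNIV. a j ^ r j) = (\<Sum>j\<in>UNIV. real (r j) * ln (a j))"
    using pow_nz by (simp add: ln_prod ln_realpow)
  have entropy_term: "(if r j = 0 then 0 else real (r j) * ln (real (r j) / (real m * a j)))
      = real (r j) * ln (real (r j)) - real (r j) * ln (real m) - real (r j) * ln (a j)" for j
  proof (cases "r j = 0")
    case False
    then have "m \<noteq> 0" using member_le_sum[of j UNIV r] sum_r by auto
    then show ?thesis using False supp[OF False] by (simp add: ln_div ln_mult algebra_simps)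
  qed simp
  have sum_real_r: "(\<Sum>j\<in>UNIV. real (r j)) = real m"
    using sum_r by (simp flip: of_nat_sum)
  have "ln (multinom m r * (\<Prod>j\<in>UNIV. a j ^ r j))
      = ln (multinom m r) + ln (\<Prod>j\<in>UNIV. a j ^ r j)"
    using pow_nz multinom_nz by (subst ln_mult) simp
  then show ?thesis
    unfolding entropy_term ln_multinom ln_pow_prod stirling_remainder_def
    by (simp add: sum.distrib sum_subtractf sum_distrib_right[symmetric] sum_real_r)
qed

lemma ln_transfer_prob_add_KL:
  fixes mu0 :: "'n::finite \<Rightarrow> nat" and A :: "'n \<Rightarrow> 'n \<Rightarrow> real" and M :: "'n \<Rightarrow> 'n \<Rightarrow> nat"
  assumes rows: "\<And>i. (\<Sum>j\<in>UNIV. M i j) = mu0 i"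
    and supp: "\<And>i j. M i j \<noteq> 0 \<Longrightarrow> diag_mul mu0 A i j \<noteq> 0"
  shows "ln (transfer_prob mu0 A M) + KL (\<lambda>i j. real (M i j)) (diag_mul mu0 A)
       = (\<Sum>i\<in>UNIV. stirling_remainder (mu0 i) - (\<Sum>j\<in>UNIV. stirling_remainder (M i j)))"
proof -
  have supp_A: "M i j \<noteq> 0 \<Longrightarrow> A i j \<noteq> 0" for i j
    using supp[of i j] by (auto simp: diag_mul_def)
  have row_nz: "multinom (mu0 i) (M i) * (\<Prod>j\<in>UNIV. A i j ^ M i j) \<noteq> 0" for i
    using supp_A by (cases "\<forall>j. M i j = 0") (auto simp: multinom_def)
  have "ln (transfer_prob mu0 A M)
      = (\<Sum>i\<in>UNIV. ln (multinom (mu0 i) (M i) * (\<Prod>j\<in>UNIV. A i j ^ M i j)))"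
    unfolding transfer_prob_def using row_nz by (simp add: ln_prod)
  moreover have "KL (\<lambda>i j. real (M i j)) (diag_mul mu0 A)
      = (\<Sum>i\<in>UNIV. \<Sum>j\<in>UNIV. if M i j = 0 then 0
                              else real (M i j) * ln (real (M i j) / (real (mu0 i) * A i j)))"
    unfolding KL_def diag_mul_def by simp
  ultimately show ?thesis
    using ln_multinom_prob_add_relative_entropy[OF rows supp_A]
    by (simp add: sum.distrib[symmetric])
qed

theorem proposition1:
  fixes A :: "'n::finite \<Rightarrow> 'n \<Rightarrow> real"
    and mu0 :: "nat \<Rightarrow> 'n \<Rightarrow> nat"
    and M :: "nat \<Rightarrow> 'n \<Rightarrow> 'n \<Rightarrow> nat"
  assumes "stochastic A"
    and "\<And>N. N \<ge> 1 \<Longrightarrow> (\<Sum>i\<in>UNIV. mu0 N i) = N"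
    and "\<And>N i. N \<ge> 1 \<Longrightarrow> (\<Sum>j\<in>UNIV. M N i j) = mu0 N i"
    and "\<And>N i j. N \<ge> 1 \<Longrightarrow> M N i j \<noteq> 0 \<Longrightarrow> diag_mul (mu0 N) A i j \<noteq> 0"
  shows "\<exists>C>0. \<forall>N\<ge>1. \<bar>ln (transfer_prob (mu0 N) A (M N))
                          + KL (\<lambda>i j. real (M N i j)) (diag_mul (mu0 N) A)\<bar> \<le> C * ln (real N)"
proof (intro exI[of _ "3 * (real CARD('n) + 1) * real CARD('n)"] conjI allI impI)
  fix N :: nat
  assume N: "N \<ge> 1"
  have mu0_le: "mu0 N i \<le> N" for i
    using member_le_sum[of i UNIV "mu0 N"] assms(2)[OF N] by simp
  have "\<bar>\<Sum>i\<in>UNIV. stirling_remainder (mu0 N i) - (\<Sum>j\<in>UNIV. stirling_remainder (M N i j))\<bar>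
      \<le> (\<Sum>i\<in>(UNIV::'n set). 3 * (real CARD('n) + 1) * ln (real N))"
    using abs_stirling_defect_le[OF assms(3)[OF N] mu0_le N]
    by (intro order.trans[OF sum_abs] sum_mono)
  then show "\<bar>ln (transfer_prob (mu0 N) A (M N))
               + KL (\<lambda>i j. real (M N i j)) (diag_mul (mu0 N) A)\<bar>
             \<le> 3 * (real CARD('n) + 1) * real CARD('n) * ln (real N)"
    by (simp add: ln_transfer_prob_add_KL[OF assms(3,4)[OF N]] algebra_simps)
qed simp

end
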